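(* Fix $p\in(0,1)$, $q=1-p$. Let $\nu_n$ be the stationary law of the careless count chain and $\mu_n:=\mathbb P_{\nu_n}(K_0<n,K_1=n)$. Then $\mu_n=\nu_n(n)(1-q^n)$, and equivalently $\mu_n=\nu_n(n-1)\frac{q^n}{n}$.
   Context: The careless count chain $(K_t)$ on $\{0,\dots,n\}$: given $K_t=k$, with probability $k/n$, $K_{t+1}\sim\mathrm{Bin}(k,q)$, and with probability $(n-k)/n$, $K_{t+1}\sim\mathrm{Bin}(k+1,q)$. It is irreducible and aperiodic with unique stationary law $\nu_n$; $\mathbb P_{\nu_n}$ denotes the chain started from $\nu_n$. *)

theory Defs
  imports "HOL-Probability.Probability"
begin

definition careless_trans :: "nat \<Rightarrow> real \<Rightarrow> nat \<Rightarrow> nat \<Rightarrow> real" where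
  "careless_trans n q k j =
     (real k / real n) * pmf (binomial_pmf k q) j
     + (real (n - k) / real n) * pmf (binomial_pmf (k + 1) q) j"

definition careless_stationary :: "nat \<Rightarrow> real \<Rightarrow> (nat \<Rightarrow> real) \<Rightarrow> bool" where
  "careless_stationary n q nu \<longleftrightarrow>
     (\<forall>k. 0 \<le> nu k) \<and> (\<forall>k>n. nu k = 0) \<and> (\<Sum>k\<le>n. nu k) = 1 \<and>
     (\<forall>j\<le>n. nu j = (\<Sum>k\<le>n. nu k * careless_trans n q k j))"

definition careless_mu :: "nat \<Rightarrow> real \<Rightarrow> (nat \<Rightarrow> real) \<Rightarrow> real" where
  "careless_mu n q nu = (\<Sum>k<n. nu k * careless_trans n q k n)"

end

theory Submission
  imports Defs
begin

text \<open>The chain can move up by at most one step, so state \<open>n\<close> is entered from below only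
  from \<open>n - 1\<close>, with probability \<open>q\<^sup>n / n\<close>; this gives the second formula. Splitting the
  stationarity equation at \<open>n\<close> into the entries from below and the self-loop of weight
  \<open>q\<^sup>n\<close> gives the first.\<close>

lemma careless_trans_eq_0_above:
  assumes "0 \<le> q" "q \<le> 1" "Suc k < j"
  shows "careless_trans n q k j = 0"
  using assms by (simp add: careless_trans_def pmf_binomial binomial_eq_0)

lemma careless_trans_Suc:
  assumes "0 \<le> q" "q \<le> 1"
  shows "careless_trans n q k (Suc k) = real (n - k) / real n * q ^ Suc k"
  using assms by (simp add: careless_trans_def pmf_binomial)

lemma careless_trans_top:
  assumes "0 \<le> q" "q \<le> 1" "1 \<le> n"
  shows "careless_trans n q n n = q ^ n"
  using assms by (simp add: careless_trans_def pmf_binomial)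

lemma careless_mu_eq_pred:
  assumes "0 \<le> q" "q \<le> 1" "1 \<le> n"
  shows "careless_mu n q nu = nu (n - 1) * q ^ n / real n"
proof -
  have trans: "careless_trans n q k n = (if k = n - 1 then q ^ n / real n else 0)"
    if "k < n" for k
  proof (cases "k = n - 1")
    case True
    with assms have "Suc k = n" "n - k = 1" by auto
    with True careless_trans_Suc[OF assms(1,2), of n k] show ?thesis by simp
  next
    case False
    with \<open>k < n\<close> have "Suc k < n" by simp
    with False careless_trans_eq_0_above[OF assms(1,2)] show ?thesis by simp
  qed
  have "careless_mu n q nu = (\<Sum>k<n. if k = n - 1 then nu k * (q ^ n / real n) else 0)"
    unfolding careless_mu_def by (intro sum.cong) (simp_all add: trans)
  also have "\<dots> = nu (n - 1) * q ^ n / real n"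
    using assms(3) by (simp add: sum.delta')
  finally show ?thesis .
qed

lemma careless_mu_eq_stationary_top:
  assumes "0 \<le> q" "q \<le> 1" "1 \<le> n" "careless_stationary n q nu"
  shows "careless_mu n q nu = nu n * (1 - q ^ n)"
proof -
  have "nu n = (\<Sum>k\<le>n. nu k * careless_trans n q k n)"
    using assms(4) by (simp add: careless_stationary_def)
  also have "\<dots> = careless_mu n q nu + nu n * q ^ n"
    using careless_trans_top[OF assms(1-3)]
    by (simp add: careless_mu_def lessThan_Suc_atMost[symmetric])
  finally show ?thesis by (simp add: algebra_simps)
qed

theorem mainTheorem15:
  fixes p q :: real and n :: nat and nu :: "nat \<Rightarrow> real"
  assumes "0 < p" "p < 1" "q = 1 - p" "n \<ge> 1"
    and "careless_stationary n q nu"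
  shows "careless_mu n q nu = nu n * (1 - q ^ n) \<and>
         careless_mu n q nu = nu (n - 1) * q ^ n / real n"
proof -
  have "0 \<le> q" "q \<le> 1" using assms(1-3) by auto
  then show ?thesis
    using careless_mu_eq_stationary_top careless_mu_eq_pred assms(4,5) by blast
qed

end
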